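(* Let $n,m\ge1$, $c_1,\dots,c_n>0$, $T>0$, $\epsilon>0$, $\kappa_{ij}\ge0$, $\bar r_1,\dots,\bar r_m>0$, $R=\prod_i[0,\bar r_i]$. For each $i$ let $p_i:\mathbb{R}\to[0,1]$ be continuous and nonincreasing, with $p_i(\tau)=1$ for $\tau\le0$ and $p_i(\tau)\to0$ as $\tau\to\infty$, and let $U_i:[0,\bar r_i]\to\mathbb{R}$ be continuous, nondecreasing and strictly concave, such that for every $\tau\in\mathbb{R}$, $\bar r_ip_i(\tau)$ is the maximizer of $U_i(r)-\tau r$ over $r\in[0,\bar r_i]$. Define $\mu_j(q_j)=0$ for $q_j\le c_j$, $\mu_j(q_j)=T(1-c_j/q_j)$ for $q_j>c_j$; $\delta_{ij}(\mu)=e^{-(\kappa_{ij}+\mu_j)/\epsilon}/\sum_ke^{-(\kappa_{ik}+\mu_k)/\epsilon}$; $\varphi^i_\epsilon(\mu)=-\epsilon\log\sum_je^{-(\kappa_{ij}+\mu_j)/\epsilon}$; and $$W(r,\mu)=\sum_i[r_i\varphi^i_\epsilon(\mu)-U_i(r_i)]+\sum_jc_j\log(1-\mu_j/T)\quad\text{on } R\times[0,T)^n.$$ Consider the elastic dynamics $$\dot q_j=\sum_ix_{ij}-\frac{q_j}{T},\quad \mu_j=\mu_j(q_j),\quad x_{ij}=r_i\delta_{ij}(\mu),\quad r_i=\bar r_ip_i(\varphi^i_\epsilon(\mu)),$$ and call $(X^*,q^*,\mu^*,r^* )$ an equilibrium point if $\mu^*_j=\mu_j(q^*_j)$, $r^*_i=\bar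 r_ip_i(\varphi^i_\epsilon(\mu^* ))$, $x^*_{ij}=r^*_i\delta_{ij}(\mu^* )$ and $\sum_ix^*_{ij}=q^*_j/T$ for all $i,j$. Then the following are equivalent: (i) $(r^*,\mu^* )$ is the saddle point of $W$ (i.e. $W(r^*,\mu)\le W(r^*,\mu^* )\le W(r,\mu^* )$ for all $r\in R$, $\mu\in[0,T)^n$), and $(X^*,q^* )$ is the solution of the problem of minimizing $\sum_{i,j}\kappa_{ij}x_{ij}+\sum_j\beta_j(q_j)+\epsilon\sum_{i,j}x_{ij}\log(x_{ij}/r^*_i)$ subject to $x_{ij}\ge0$, $\sum_jx_{ij}=r^*_i$, $\sum_ix_{ij}=q_j/T$, where $\beta_j(q)=0$ for $q\le c_j$ and $\beta_j(q)=q-c_j-c_j\log(q/c_j)$ for $q>c_j$; (ii) $(X^*,q^*,\mu^*,r^* )$ is an equilibrium point of the elastic dynamics. In particular, the elastic dynamics have a unique equilibrium point.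
   Context: Convention $0\log0=0$ (terms with $x_{ij}=0$ contribute zero). $p_i(\tau)$ is the probability that a customer from location $i$ is willing to wait longer than $\tau$, $\bar r_i$ the maximal request rate, and $U_i$ the associated utility, whose inverse derivative gives the demand curve $\bar r_ip_i$; strict concavity of $U_i$ is the paper's Assumption 1. *)

theory Defs
  imports "HOL-Analysis.Analysis"
begin

text \<open>Locations are indexed by a finite type 'm (i), stations by a finite type 'n (j).\<close>

definition strict_concave_on :: "real set \<Rightarrow> (real \<Rightarrow> real) \<Rightarrow> bool" where
  "strict_concave_on S f \<longleftrightarrow> convex S \<and>
     (\<forall>x\<in>S. \<forall>y\<in>S. \<forall>t. x \<noteq> y \<and> 0 < t \<and> t < 1 \<longrightarrow>
        t * f x + (1 - t) * f y < f (t * x + (1 - t) * y))"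

definition mu_of :: "real \<Rightarrow> real \<Rightarrow> real \<Rightarrow> real" where
  "mu_of T c q = (if q \<le> c then 0 else T * (1 - c / q))"

definition delta :: "real \<Rightarrow> ('m \<Rightarrow> 'n::finite \<Rightarrow> real) \<Rightarrow> ('n \<Rightarrow> real) \<Rightarrow> 'm \<Rightarrow> 'n \<Rightarrow> real" where
  "delta \<epsilon> \<kappa> \<mu> i j =
     exp (- (\<kappa> i j + \<mu> j) / \<epsilon>) / (\<Sum>k\<in>UNIV. exp (- (\<kappa> i k + \<mu> k) / \<epsilon>))"

definition phi :: "real \<Rightarrow> ('m \<Rightarrow> 'n::finite \<Rightarrow> real) \<Rightarrow> ('n \<Rightarrow> real) \<Rightarrow> 'm \<Rightarrow> real" where
  "phi \<epsilon> \<kappa> \<mu> i = - \<epsilon> * ln (\<Sum>j\<in>UNIV. exp (- (\<kappa> i j + \<mu> j) / \<epsilon>))"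

definition W :: "real \<Rightarrow> ('m::finite \<Rightarrow> 'n::finite \<Rightarrow> real) \<Rightarrow> ('n \<Rightarrow> real) \<Rightarrow> real
                 \<Rightarrow> ('m \<Rightarrow> real \<Rightarrow> real) \<Rightarrow> ('m \<Rightarrow> real) \<Rightarrow> ('n \<Rightarrow> real) \<Rightarrow> real" where
  "W \<epsilon> \<kappa> c T U r \<mu> =
     (\<Sum>i\<in>UNIV. r i * phi \<epsilon> \<kappa> \<mu> i - U i (r i)) + (\<Sum>j\<in>UNIV. c j * ln (1 - \<mu> j / T))"

definition Rbox :: "('m \<Rightarrow> real) \<Rightarrow> ('m \<Rightarrow> real) set" where
  "Rbox rbar = {r. \<forall>i. 0 \<le> r i \<and> r i \<le> rbar i}"

definition Mbox :: "real \<Rightarrow> ('n \<Rightarrow> real) set" where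
  "Mbox T = {\<mu>. \<forall>j. 0 \<le> \<mu> j \<and> \<mu> j < T}"

definition saddle_point_W :: "real \<Rightarrow> ('m::finite \<Rightarrow> 'n::finite \<Rightarrow> real) \<Rightarrow> ('n \<Rightarrow> real) \<Rightarrow> real
      \<Rightarrow> ('m \<Rightarrow> real \<Rightarrow> real) \<Rightarrow> ('m \<Rightarrow> real) \<Rightarrow> ('m \<Rightarrow> real) \<Rightarrow> ('n \<Rightarrow> real) \<Rightarrow> bool" where
  "saddle_point_W \<epsilon> \<kappa> c T U rbar rs \<mu>s \<longleftrightarrow>
     rs \<in> Rbox rbar \<and> \<mu>s \<in> Mbox T \<and>
     (\<forall>r\<in>Rbox rbar. \<forall>\<mu>\<in>Mbox T.
        W \<epsilon> \<kappa> c T U rs \<mu> \<le> W \<epsilon> \<kappa> c T U rs \<mu>s \<and>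
        W \<epsilon> \<kappa> c T U rs \<mu>s \<le> W \<epsilon> \<kappa> c T U r \<mu>s)"

definition beta :: "real \<Rightarrow> real \<Rightarrow> real" where
  "beta c q = (if q \<le> c then 0 else q - c - c * ln (q / c))"

definition xlogx :: "real \<Rightarrow> real \<Rightarrow> real" where
  "xlogx x r = (if x = 0 then 0 else x * ln (x / r))"

definition feasible :: "real \<Rightarrow> ('m::finite \<Rightarrow> real) \<Rightarrow> ('m \<Rightarrow> 'n::finite \<Rightarrow> real) \<Rightarrow> ('n \<Rightarrow> real) \<Rightarrow> bool" where
  "feasible T rs X q \<longleftrightarrow>
     (\<forall>i j. 0 \<le> X i j) \<and> (\<forall>i. (\<Sum>j\<in>UNIV. X i j) = rs i) \<and>
     (\<forall>j. (\<Sum>i\<in>UNIV. X i j) = q j / T)"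

definition objective :: "real \<Rightarrow> ('m::finite \<Rightarrow> 'n::finite \<Rightarrow> real) \<Rightarrow> ('n \<Rightarrow> real)
      \<Rightarrow> ('m \<Rightarrow> real) \<Rightarrow> ('m \<Rightarrow> 'n \<Rightarrow> real) \<Rightarrow> ('n \<Rightarrow> real) \<Rightarrow> real" where
  "objective \<epsilon> \<kappa> c rs X q =
     (\<Sum>i\<in>UNIV. \<Sum>j\<in>UNIV. \<kappa> i j * X i j) + (\<Sum>j\<in>UNIV. beta (c j) (q j))
     + \<epsilon> * (\<Sum>i\<in>UNIV. \<Sum>j\<in>UNIV. xlogx (X i j) (rs i))"

definition solves_transport :: "real \<Rightarrow> real \<Rightarrow> ('m::finite \<Rightarrow> 'n::finite \<Rightarrow> real) \<Rightarrow> ('n \<Rightarrow> real)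
      \<Rightarrow> ('m \<Rightarrow> real) \<Rightarrow> ('m \<Rightarrow> 'n \<Rightarrow> real) \<Rightarrow> ('n \<Rightarrow> real) \<Rightarrow> bool" where
  "solves_transport \<epsilon> T \<kappa> c rs X q \<longleftrightarrow>
     feasible T rs X q \<and>
     (\<forall>X' q'. feasible T rs X' q' \<longrightarrow> objective \<epsilon> \<kappa> c rs X q \<le> objective \<epsilon> \<kappa> c rs X' q')"

definition equilibrium :: "real \<Rightarrow> real \<Rightarrow> ('m::finite \<Rightarrow> 'n::finite \<Rightarrow> real) \<Rightarrow> ('n \<Rightarrow> real)
      \<Rightarrow> ('m \<Rightarrow> real) \<Rightarrow> ('m \<Rightarrow> real \<Rightarrow> real)
      \<Rightarrow> ('m \<Rightarrow> 'n \<Rightarrow> real) \<Rightarrow> ('n \<Rightarrow> real) \<Rightarrow> ('n \<Rightarrow> real) \<Rightarrow> ('m \<Rightarrow> real) \<Rightarrow> bool" where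
  "equilibrium \<epsilon> T \<kappa> c rbar p X q \<mu> r \<longleftrightarrow>
     (\<forall>j. \<mu> j = mu_of T (c j) (q j)) \<and>
     (\<forall>i. r i = rbar i * p i (phi \<epsilon> \<kappa> \<mu> i)) \<and>
     (\<forall>i j. X i j = r i * delta \<epsilon> \<kappa> \<mu> i j) \<and>
     (\<forall>j. (\<Sum>i\<in>UNIV. X i j) = q j / T)"

end

theory Submission
  imports Defs
begin

text \<open>An equilibrium exists by Brouwer's theorem, applied to the map sending a queue vector to the
  queues generated by the flows it induces. At an equilibrium the rates minimise \<open>W (-, \<mu>)\<close>,
  since \<open>rbar i * p i (phi i)\<close> maximises \<open>U i r - phi i * r\<close>; the prices maximise the concave
  function \<open>W (r, -)\<close>, since its supergradient \<open>\<Sum>i. r i * delta i j - c j / (T - \<mu> j)\<close>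
  vanishes where \<open>\<mu> j > 0\<close> and is nonpositive where \<open>\<mu> j = 0\<close>; and the flows solve the
  transport problem, because any feasible flow exceeds the objective at \<open>X\<close> by at least
  \<open>\<epsilon>\<close> times its KL divergence from \<open>X\<close>. Conversely, the barrier term makes \<open>W (r, -)\<close>
  strictly concave and the \<open>U i\<close> are strictly concave, so the saddle point is unique, and the
  KL bound makes the transport solution unique; hence every pair of solutions in (i) coincides
  with the equilibrium found by Brouwer's theorem, which is therefore the only one.\<close>

lemma delta_pos: "0 < delta \<epsilon> \<kappa> \<mu> i j"
  unfolding delta_def by (intro divide_pos_pos sum_pos) auto

lemma sum_delta_eq_1: "(\<Sum>j\<in>UNIV. delta \<epsilon> \<kappa> \<mu> i j) = 1"
proof -
  have "(\<Sum>k\<in>UNIV. exp (- (\<kappa> i k + \<mu> k) / \<epsilon>)) > 0" by (intro sum_pos) auto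
  then show ?thesis unfolding delta_def by (simp add: sum_divide_distrib[symmetric])
qed

lemma delta_le_1: "delta \<epsilon> \<kappa> \<mu> i j \<le> 1"
  using member_le_sum[of j UNIV "delta \<epsilon> \<kappa> \<mu> i"] by (simp add: less_imp_le[OF delta_pos] sum_delta_eq_1)

lemma eps_ln_delta:
  assumes "\<epsilon> \<noteq> 0"
  shows "\<epsilon> * ln (delta \<epsilon> \<kappa> \<mu> i j) = phi \<epsilon> \<kappa> \<mu> i - \<kappa> i j - \<mu> j"
proof -
  have "(\<Sum>k\<in>UNIV. exp (- (\<kappa> i k + \<mu> k) / \<epsilon>)) > 0" by (intro sum_pos) auto
  then show ?thesis using assms by (simp add: delta_def phi_def ln_div field_simps)
qed

lemma phi_le_tangent:
  assumes "\<epsilon> > 0"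
  shows "phi \<epsilon> \<kappa> \<mu>' i \<le> phi \<epsilon> \<kappa> \<mu> i + (\<Sum>j\<in>UNIV. delta \<epsilon> \<kappa> \<mu> i j * (\<mu>' j - \<mu> j))"
proof -
  define Z where "Z = (\<Sum>k\<in>UNIV. exp (- (\<kappa> i k + \<mu> k) / \<epsilon>))"
  define d where "d j = (\<mu>' j - \<mu> j) / \<epsilon>" for j
  have Z_pos: "Z > 0" unfolding Z_def by (intro sum_pos) auto
  have "exp (- (\<kappa> i j + \<mu>' j) / \<epsilon>) = Z * (delta \<epsilon> \<kappa> \<mu> i j * exp (- d j))" for j
    using Z_pos assms by (simp add: delta_def Z_def d_def exp_add[symmetric] field_simps)
  then have sum_eq: "(\<Sum>j\<in>UNIV. exp (- (\<kappa> i j + \<mu>' j) / \<epsilon>))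
      = Z * (\<Sum>j\<in>UNIV. delta \<epsilon> \<kappa> \<mu> i j * exp (- d j))"
    by (simp add: sum_distrib_left)
  define D where "D = (\<Sum>j\<in>UNIV. delta \<epsilon> \<kappa> \<mu> i j * d j)"
  have "exp (- D) \<le> (\<Sum>j\<in>UNIV. delta \<epsilon> \<kappa> \<mu> i j * exp (- d j))"
    using convex_on_sum[OF finite UNIV_not_empty exp_convex, of "delta \<epsilon> \<kappa> \<mu> i" "\<lambda>j. - d j"]
    by (simp add: D_def sum_negf sum_delta_eq_1 less_imp_le[OF delta_pos])
  then have "Z * exp (- D) \<le> (\<Sum>j\<in>UNIV. exp (- (\<kappa> i j + \<mu>' j) / \<epsilon>))"
    unfolding sum_eq using Z_pos by simp
  then have "ln Z - D \<le> ln (\<Sum>j\<in>UNIV. exp (- (\<kappa> i j + \<mu>' j) / \<epsilon>))"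
    using Z_pos by (subst (asm) ln_le_cancel_iff[symmetric]) (auto simp: ln_mult intro: sum_pos)
  then have "\<epsilon> * (ln Z - D) \<le> \<epsilon> * ln (\<Sum>j\<in>UNIV. exp (- (\<kappa> i j + \<mu>' j) / \<epsilon>))"
    using assms by (intro mult_left_mono) auto
  then have "phi \<epsilon> \<kappa> \<mu>' i \<le> - \<epsilon> * ln Z + \<epsilon> * D"
    by (simp add: phi_def algebra_simps)
  also have "\<epsilon> * D = (\<Sum>j\<in>UNIV. delta \<epsilon> \<kappa> \<mu> i j * (\<mu>' j - \<mu> j))"
    using assms by (simp add: D_def sum_distrib_left d_def)
  finally show ?thesis by (simp add: phi_def Z_def)
qed

lemma mu_of_nonneg: "c > 0 \<Longrightarrow> T > 0 \<Longrightarrow> 0 \<le> mu_of T c q"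
  by (auto simp: mu_of_def field_simps)

lemma mu_of_less: "c > 0 \<Longrightarrow> T > 0 \<Longrightarrow> mu_of T c q < T"
  by (auto simp: mu_of_def field_simps)

lemma mu_of_eq_max: "c > 0 \<Longrightarrow> mu_of T c q = T * (1 - c / max q c)"
  by (auto simp: mu_of_def max_def)

lemma beta_ge_tangent:
  assumes c: "c > 0" and T: "T > 0"
  shows "beta c q + mu_of T c q / T * (q' - q) \<le> beta c q'"
proof (cases "q \<le> c")
  case True
  have "c * ln (q' / c) \<le> c * (q' / c - 1)" if "q' > c"
    using that c by (intro mult_left_mono ln_le_minus_one) auto
  then show ?thesis using True c by (auto simp: beta_def mu_of_def right_diff_distrib)
next
  case False
  then have q: "q > c" by simp
  have "beta c q + (1 - c / q) * (q' - q) \<le> beta c q'"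
  proof (cases "q' \<le> c")
    case True
    have "c * ln (c / q) \<le> c * (c / q - 1)"
      using ln_le_minus_one[of "c / q"] q c by (intro mult_left_mono) auto
    then have "c * (1 - c / q) \<le> c * ln (q / c)" using q c by (simp add: ln_div algebra_simps)
    moreover have "(1 - c / q) * q' \<le> (1 - c / q) * c" using True q c by (intro mult_left_mono) auto
    moreover have "(1 - c / q) * (q' - q) = (1 - c / q) * q' - q + c"
      using q c by (simp add: field_simps)
    ultimately show ?thesis using True q by (simp add: beta_def algebra_simps)
  next
    case False
    have "c * ln (q' / q) \<le> c * (q' / q - 1)"
      using ln_le_minus_one[of "q' / q"] False q c by (intro mult_left_mono) auto
    moreover have "ln (q' / c) = ln (q' / q) + ln (q / c)" using False q c by (simp add: ln_div)
    ultimately show ?thesis using False q c by (simp add: beta_def field_simps)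
  qed
  moreover have "mu_of T c q / T = 1 - c / q" using q T by (simp add: mu_of_def)
  ultimately show ?thesis by simp
qed

definition kl_div :: "real \<Rightarrow> real \<Rightarrow> real" where
  "kl_div y x = xlogx y x - y + x"

text \<open>The hypothesis \<open>x = 0 \<Longrightarrow> y = 0\<close> is needed: the junk values \<open>y / 0 = 0\<close> and
  \<open>ln 0 = 0\<close> make \<open>xlogx y 0 = 0\<close>, so \<open>kl_div y 0 = - y\<close>.\<close>
lemma kl_div_nonneg:
  assumes x: "0 \<le> x" and y: "0 \<le> y" and "x = 0 \<Longrightarrow> y = 0"
  shows "0 \<le> kl_div y x"
proof (cases "y = 0")
  case False
  then have "0 < x" "0 < y" using assms by force+
  then have "y * ln (x / y) \<le> y * (x / y - 1)" by (intro mult_left_mono ln_le_minus_one) auto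
  then show ?thesis using \<open>0 < x\<close> \<open>0 < y\<close> by (simp add: kl_div_def xlogx_def ln_div algebra_simps)
qed (use x in \<open>simp add: kl_div_def xlogx_def\<close>)

lemma kl_div_eq_0_iff:
  assumes x: "0 \<le> x" and y: "0 \<le> y" and "x = 0 \<Longrightarrow> y = 0"
  shows "kl_div y x = 0 \<longleftrightarrow> y = x"
proof
  assume kl: "kl_div y x = 0"
  show "y = x"
  proof (cases "y = 0")
    case False
    then have "0 < x" "0 < y" using assms by force+
    then have "ln (x / y) = x / y - 1"
      using kl by (simp add: kl_div_def xlogx_def ln_div field_simps)
    then show ?thesis using ln_eq_minus_one[of "x / y"] \<open>0 < x\<close> \<open>0 < y\<close> by simp
  qed (use kl in \<open>simp add: kl_div_def xlogx_def\<close>)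
qed (simp add: kl_div_def xlogx_def)

lemma xlogx_diff_eq:
  assumes x: "x > 0" and r: "r > 0" and y: "y \<ge> 0"
  shows "xlogx y r - xlogx x r = kl_div y x + (y - x) * (ln (x / r) + 1)"
proof (cases "y = 0")
  case False
  then have "ln (y / r) = ln (y / x) + ln (x / r)" using x y r by (simp add: ln_div)
  then show ?thesis using False x by (simp add: kl_div_def xlogx_def algebra_simps)
qed (use x in \<open>simp add: kl_div_def xlogx_def algebra_simps\<close>)

lemma ln_le_tangent:
  fixes y y' :: real
  assumes "y > 0" "y' > 0"
  shows "ln y' \<le> ln y + (y' - y) / y"
  using ln_le_minus_one[of "y' / y"] assms by (simp add: ln_div diff_divide_distrib)

lemma ln_midpoint_gt:
  fixes a b :: real
  assumes a: "a > 0" and b: "b > 0" and "a \<noteq> b"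
  shows "ln a + ln b < 2 * ln ((a + b) / 2)"
proof -
  have "0 < (a - b)\<^sup>2" using \<open>a \<noteq> b\<close> by simp
  then have "a * b < ((a + b) / 2)\<^sup>2" by (simp add: power2_eq_square field_simps)
  then have "ln (a * b) < ln (((a + b) / 2)\<^sup>2)" using a b by simp
  then show ?thesis using a b by (simp add: ln_mult ln_realpow)
qed

lemma ln_barrier_midpoint_gt:
  fixes c T \<mu>1 \<mu>2 :: real
  assumes c: "c > 0" and T: "T > 0" and "\<mu>1 < T" "\<mu>2 < T" "\<mu>1 \<noteq> \<mu>2"
  shows "c * ln (1 - \<mu>1 / T) + c * ln (1 - \<mu>2 / T) < 2 * (c * ln (1 - (\<mu>1 + \<mu>2) / 2 / T))"
proof -
  have "ln (1 - \<mu>1 / T) + ln (1 - \<mu>2 / T) < 2 * ln (((1 - \<mu>1 / T) + (1 - \<mu>2 / T)) / 2)"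
    using assms by (intro ln_midpoint_gt) (auto simp: field_simps)
  also have "((1 - \<mu>1 / T) + (1 - \<mu>2 / T)) / 2 = 1 - (\<mu>1 + \<mu>2) / 2 / T"
    using T by (simp add: field_simps)
  finally have "c * (ln (1 - \<mu>1 / T) + ln (1 - \<mu>2 / T)) < c * (2 * ln (1 - (\<mu>1 + \<mu>2) / 2 / T))"
    using c by (rule mult_strict_left_mono)
  then show ?thesis by (simp add: algebra_simps)
qed

lemma strict_concave_onD:
  assumes "strict_concave_on S f" "x \<in> S" "y \<in> S" "x \<noteq> y" "0 < t" "t < 1"
  shows "t * f x + (1 - t) * f y < f (t * x + (1 - t) * y)"
  using assms unfolding strict_concave_on_def by blast

lemma strict_concave_on_diff_linear:
  "strict_concave_on S f \<Longrightarrow> strict_concave_on S (\<lambda>x. f x - \<tau> * x)"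
  unfolding strict_concave_on_def by (auto simp: algebra_simps)

lemma strict_concave_on_arg_max_unique:
  assumes f: "strict_concave_on S f" and a: "is_arg_max f (\<lambda>x. x \<in> S) a"
    and x: "x \<in> S" and le: "f a \<le> f x"
  shows "x = a"
proof (rule ccontr)
  assume "x \<noteq> a"
  have "a \<in> S" and a_max: "\<And>y. y \<in> S \<Longrightarrow> f y \<le> f a"
    using a by (auto simp: is_arg_max_linorder)
  then have "(1/2) * x + (1 - 1/2) * a \<in> S"
    using convexD[of S x a "1/2" "1/2"] x f by (simp add: strict_concave_on_def)
  moreover have "(1/2) * f x + (1 - 1/2) * f a < f ((1/2) * x + (1 - 1/2) * a)"
    by (rule strict_concave_onD[OF f x \<open>a \<in> S\<close> \<open>x \<noteq> a\<close>]) auto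
  ultimately show False using a_max le by fastforce
qed

text \<open>This is where the price formula comes from: the stationarity condition
  \<open>q / T = c / (T - \<mu>)\<close> gives \<open>\<mu> = T * (1 - c / q)\<close>, clipped at \<open>0\<close> when \<open>q \<le> c\<close>.\<close>
lemma is_arg_max_mu_of:
  assumes c: "c > 0" and T: "T > 0"
  shows "is_arg_max (\<lambda>\<mu>. c * ln (1 - \<mu> / T) + q / T * \<mu>) (\<lambda>\<mu>. 0 \<le> \<mu> \<and> \<mu> < T) (mu_of T c q)"
proof -
  define m where "m = mu_of T c q"
  have m: "0 \<le> m" "m < T" using mu_of_nonneg[OF c T] mu_of_less[OF c T] by (simp_all add: m_def)
  have "c * ln (1 - \<mu> / T) + q / T * \<mu> \<le> c * ln (1 - m / T) + q / T * m" if "0 \<le> \<mu>" "\<mu> < T" for \<mu>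
  proof -
    have "ln (1 - \<mu> / T) \<le> ln (1 - m / T) + ((1 - \<mu> / T) - (1 - m / T)) / (1 - m / T)"
      using m that T by (intro ln_le_tangent) (auto simp: field_simps)
    also have "((1 - \<mu> / T) - (1 - m / T)) / (1 - m / T) = - (\<mu> - m) / (T - m)"
      using m T by (simp add: field_simps)
    finally have "c * ln (1 - \<mu> / T) \<le> c * (ln (1 - m / T) + - (\<mu> - m) / (T - m))"
      using c by (intro mult_left_mono) auto
    then have "c * ln (1 - \<mu> / T) \<le> c * ln (1 - m / T) - (c / (T - m) * \<mu> - c / (T - m) * m)"
      by (simp add: algebra_simps diff_divide_distrib)
    moreover have "q / T * \<mu> - q / T * m \<le> c / (T - m) * \<mu> - c / (T - m) * m"
    proof (cases "q \<le> c")
      case True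
      then have "q / T * \<mu> \<le> c / T * \<mu>" using T that by (intro mult_right_mono divide_right_mono) auto
      then show ?thesis using True by (simp add: m_def mu_of_def)
    next
      case False
      then have "c / (T - m) = q / T" using c T by (simp add: m_def mu_of_def field_simps)
      then show ?thesis by simp
    qed
    ultimately show ?thesis by linarith
  qed
  then show ?thesis using m by (simp add: is_arg_max_linorder m_def)
qed

lemma feasible_row_eq_0:
  assumes "feasible T r X q" "r i = 0"
  shows "X i j = 0"
proof -
  have "(\<Sum>j\<in>UNIV. X i j) = 0" "\<And>j. 0 \<le> X i j" using assms by (auto simp: feasible_def)
  then show ?thesis by (simp add: sum_nonneg_eq_0_iff)
qed

lemma continuous_on_mu_of:
  assumes "c > 0"
  shows "continuous_on A (mu_of T c)"
proof -
  have "mu_of T c = (\<lambda>q. T * (1 - c / max q c))" using assms by (simp add: fun_eq_iff mu_of_eq_max)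
  then show ?thesis using assms by (simp, intro continuous_intros) auto
qed

lemma continuous_on_phi:
  assumes "\<epsilon> \<noteq> 0" and "\<And>j. continuous_on S (\<lambda>v. \<mu> v j)"
  shows "continuous_on S (\<lambda>v. phi \<epsilon> \<kappa> (\<mu> v) i)"
proof -
  have "(\<Sum>j\<in>UNIV. exp (- (\<kappa> i j + \<mu> v j) / \<epsilon>)) \<noteq> 0" for v
    by (intro less_imp_neq[symmetric] sum_pos) auto
  then show ?thesis unfolding phi_def by (intro continuous_intros assms(2)) (use assms(1) in auto)
qed

lemma continuous_on_delta:
  assumes "\<epsilon> \<noteq> 0" and "\<And>j. continuous_on S (\<lambda>v. \<mu> v j)"
  shows "continuous_on S (\<lambda>v. delta \<epsilon> \<kappa> (\<mu> v) i j)"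
proof -
  have "(\<Sum>j\<in>UNIV. exp (- (\<kappa> i j + \<mu> v j) / \<epsilon>)) \<noteq> 0" for v
    by (intro less_imp_neq[symmetric] sum_pos) auto
  then show ?thesis unfolding delta_def by (intro continuous_intros assms(2)) (use assms(1) in auto)
qed

lemma W_fun_upd:
  "W \<epsilon> \<kappa> c T U (r(i := a)) \<mu>
     = W \<epsilon> \<kappa> c T U r \<mu> + (a * phi \<epsilon> \<kappa> \<mu> i - U i a) - (r i * phi \<epsilon> \<kappa> \<mu> i - U i (r i))"
proof -
  have "W \<epsilon> \<kappa> c T U (r(i := a)) \<mu> - W \<epsilon> \<kappa> c T U r \<mu>
      = (\<Sum>k\<in>UNIV. ((r(i := a)) k * phi \<epsilon> \<kappa> \<mu> k - U k ((r(i := a)) k))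
          - (r k * phi \<epsilon> \<kappa> \<mu> k - U k (r k)))"
    by (simp add: W_def sum_subtractf)
  also have "\<dots> = (\<Sum>k\<in>UNIV. if k = i
      then (a * phi \<epsilon> \<kappa> \<mu> i - U i a) - (r i * phi \<epsilon> \<kappa> \<mu> i - U i (r i)) else 0)"
    by (rule sum.cong) auto
  finally show ?thesis by simp
qed

lemma feasible_eq_0_if_flow_eq_0:
  assumes X: "\<And>i j. X i j = r i * delta \<epsilon> \<kappa> \<mu> i j" and "feasible T r X' q'" and "X i j = 0"
  shows "X' i j = 0"
proof -
  have "r i = 0" using \<open>X i j = 0\<close> delta_pos[of \<epsilon> \<kappa> \<mu> i j] by (simp add: X)
  then show ?thesis using feasible_row_eq_0[OF \<open>feasible T r X' q'\<close>] by simp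
qed

lemma kl_div_feasible_flow:
  assumes X: "\<And>i j. X i j = r i * delta \<epsilon> \<kappa> \<mu> i j" and r_nonneg: "\<And>i. 0 \<le> r i"
    and feasible: "feasible T r X' q'"
  shows "0 \<le> kl_div (X' i j) (X i j)" and "kl_div (X' i j) (X i j) = 0 \<longleftrightarrow> X' i j = X i j"
proof -
  have "0 \<le> X i j" using r_nonneg[of i] delta_pos[of \<epsilon> \<kappa> \<mu> i j] by (simp add: X)
  moreover have "0 \<le> X' i j" using feasible by (simp add: feasible_def)
  moreover have "X i j = 0 \<Longrightarrow> X' i j = 0" by (rule feasible_eq_0_if_flow_eq_0[OF X feasible])
  ultimately show "0 \<le> kl_div (X' i j) (X i j)" and "kl_div (X' i j) (X i j) = 0 \<longleftrightarrow> X' i j = X i j"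
    by (simp_all add: kl_div_nonneg kl_div_eq_0_iff)
qed

lemma saddle_point_W_le:
  assumes "saddle_point_W \<epsilon> \<kappa> c T U rbar r \<mu>"
  shows saddle_point_W_max: "\<mu>' \<in> Mbox T \<Longrightarrow> W \<epsilon> \<kappa> c T U r \<mu>' \<le> W \<epsilon> \<kappa> c T U r \<mu>"
    and saddle_point_W_min: "r' \<in> Rbox rbar \<Longrightarrow> W \<epsilon> \<kappa> c T U r \<mu> \<le> W \<epsilon> \<kappa> c T U r' \<mu>"
  using assms unfolding saddle_point_W_def by blast+

lemma equilibriumD:
  assumes "equilibrium \<epsilon> T \<kappa> c rbar p X q \<mu> r"
  shows "\<mu> j = mu_of T (c j) (q j)" and "r i = rbar i * p i (phi \<epsilon> \<kappa> \<mu> i)"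
    and "X i j = r i * delta \<epsilon> \<kappa> \<mu> i j" and "(\<Sum>i\<in>UNIV. X i j) = q j / T"
  using assms unfolding equilibrium_def by blast+

locale priced_network =
  fixes \<epsilon> T :: real and \<kappa> :: "'m::finite \<Rightarrow> 'n::finite \<Rightarrow> real" and c :: "'n \<Rightarrow> real"
  assumes eps_pos: "\<epsilon> > 0" and T_pos: "T > 0" and c_pos: "\<And>j. c j > 0"
begin

lemma W_le_at_clearing_price:
  assumes \<mu>: "\<And>j. \<mu> j = mu_of T (c j) (q j)"
    and clearing: "\<And>j. (\<Sum>i\<in>UNIV. r i * delta \<epsilon> \<kappa> \<mu> i j) = q j / T"
    and r_nonneg: "\<And>i. 0 \<le> r i" and \<mu>': "\<mu>' \<in> Mbox T"
  shows "W \<epsilon> \<kappa> c T U r \<mu>' \<le> W \<epsilon> \<kappa> c T U r \<mu>"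
proof -
  have "r i * phi \<epsilon> \<kappa> \<mu>' i \<le> r i * phi \<epsilon> \<kappa> \<mu> i + (\<Sum>j\<in>UNIV. r i * delta \<epsilon> \<kappa> \<mu> i j * (\<mu>' j - \<mu> j))" for i
    using mult_left_mono[OF phi_le_tangent[OF eps_pos] r_nonneg]
    by (simp add: distrib_left sum_distrib_left mult.assoc)
  then have "(\<Sum>i\<in>UNIV. r i * phi \<epsilon> \<kappa> \<mu>' i)
      \<le> (\<Sum>i\<in>UNIV. r i * phi \<epsilon> \<kappa> \<mu> i) + (\<Sum>i\<in>UNIV. \<Sum>j\<in>UNIV. r i * delta \<epsilon> \<kappa> \<mu> i j * (\<mu>' j - \<mu> j))"
    by (subst sum.distrib[symmetric]) (rule sum_mono)
  also have "(\<Sum>i\<in>UNIV. \<Sum>j\<in>UNIV. r i * delta \<epsilon> \<kappa> \<mu> i j * (\<mu>' j - \<mu> j))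
      = (\<Sum>j\<in>UNIV. q j / T * (\<mu>' j - \<mu> j))"
    by (subst sum.swap) (simp only: sum_distrib_right[symmetric] clearing)
  finally have phi_part: "(\<Sum>i\<in>UNIV. r i * phi \<epsilon> \<kappa> \<mu>' i)
      \<le> (\<Sum>i\<in>UNIV. r i * phi \<epsilon> \<kappa> \<mu> i) + (\<Sum>j\<in>UNIV. q j / T * (\<mu>' j - \<mu> j))" .
  moreover have "c j * ln (1 - \<mu>' j / T) \<le> c j * ln (1 - \<mu> j / T) - q j / T * (\<mu>' j - \<mu> j)" for j
    using is_arg_max_mu_of[OF c_pos[of j] T_pos, of "q j"] \<mu>' \<mu>[of j]
    by (auto simp: is_arg_max_linorder Mbox_def algebra_simps)
  then have "(\<Sum>j\<in>UNIV. c j * ln (1 - \<mu>' j / T))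
      \<le> (\<Sum>j\<in>UNIV. c j * ln (1 - \<mu> j / T)) - (\<Sum>j\<in>UNIV. q j / T * (\<mu>' j - \<mu> j))"
    by (simp add: sum_mono flip: sum_subtractf)
  ultimately show ?thesis by (simp add: W_def sum_subtractf)
qed

lemma W_midpoint_gt:
  assumes r_nonneg: "\<And>i. 0 \<le> r i" and \<mu>1: "\<mu>1 \<in> Mbox T" and \<mu>2: "\<mu>2 \<in> Mbox T" and "\<mu>1 \<noteq> \<mu>2"
  shows "W \<epsilon> \<kappa> c T U r \<mu>1 + W \<epsilon> \<kappa> c T U r \<mu>2 < 2 * W \<epsilon> \<kappa> c T U r (\<lambda>j. (\<mu>1 j + \<mu>2 j) / 2)"
proof -
  define m where "m = (\<lambda>j. (\<mu>1 j + \<mu>2 j) / 2)"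
  have "phi \<epsilon> \<kappa> \<mu>1 i + phi \<epsilon> \<kappa> \<mu>2 i \<le> 2 * phi \<epsilon> \<kappa> m i" for i
  proof -
    have "(\<Sum>j\<in>UNIV. delta \<epsilon> \<kappa> m i j * (\<mu>1 j - m j)) + (\<Sum>j\<in>UNIV. delta \<epsilon> \<kappa> m i j * (\<mu>2 j - m j)) = 0"
      by (simp add: m_def flip: sum.distrib distrib_left)
    then show ?thesis
      using phi_le_tangent[OF eps_pos, of \<kappa> \<mu>1 i m] phi_le_tangent[OF eps_pos, of \<kappa> \<mu>2 i m] by simp
  qed
  then have "r i * (phi \<epsilon> \<kappa> \<mu>1 i + phi \<epsilon> \<kappa> \<mu>2 i) \<le> r i * (2 * phi \<epsilon> \<kappa> m i)" for i
    using r_nonneg by (rule mult_left_mono)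
  then have phi_part: "(\<Sum>i\<in>UNIV. r i * phi \<epsilon> \<kappa> \<mu>1 i) + (\<Sum>i\<in>UNIV. r i * phi \<epsilon> \<kappa> \<mu>2 i)
      \<le> 2 * (\<Sum>i\<in>UNIV. r i * phi \<epsilon> \<kappa> m i)"
    by (simp add: sum_distrib_left sum_mono algebra_simps flip: sum.distrib)
  define b where "b \<mu> j = c j * ln (1 - \<mu> j / T)" for \<mu> j
  have "b \<mu>1 j + b \<mu>2 j < 2 * b m j" if "\<mu>1 j \<noteq> \<mu>2 j" for j
    using ln_barrier_midpoint_gt[OF c_pos T_pos _ _ that] \<mu>1 \<mu>2 by (simp add: Mbox_def b_def m_def)
  moreover have "b \<mu>1 j + b \<mu>2 j \<le> 2 * b m j" for j
    using calculation[of j] by (cases "\<mu>1 j = \<mu>2 j") (auto simp: b_def m_def)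
  moreover obtain j0 where "\<mu>1 j0 \<noteq> \<mu>2 j0" using \<open>\<mu>1 \<noteq> \<mu>2\<close> by auto
  ultimately have "(\<Sum>j\<in>UNIV. b \<mu>1 j + b \<mu>2 j) < (\<Sum>j\<in>UNIV. 2 * b m j)"
    by (intro sum_strict_mono_ex1) auto
  then have barrier_part: "(\<Sum>j\<in>UNIV. b \<mu>1 j) + (\<Sum>j\<in>UNIV. b \<mu>2 j) < 2 * (\<Sum>j\<in>UNIV. b m j)"
    by (simp add: sum.distrib sum_distrib_left)
  have W_eq: "W \<epsilon> \<kappa> c T U r \<mu> = (\<Sum>i\<in>UNIV. r i * phi \<epsilon> \<kappa> \<mu> i) - (\<Sum>i\<in>UNIV. U i (r i)) + (\<Sum>j\<in>UNIV. b \<mu> j)"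
    for \<mu> by (simp add: W_def b_def sum_subtractf)
  have "W \<epsilon> \<kappa> c T U r \<mu>1 + W \<epsilon> \<kappa> c T U r \<mu>2 < 2 * W \<epsilon> \<kappa> c T U r m"
    unfolding W_eq distrib_left right_diff_distrib using phi_part barrier_part by linarith
  then show ?thesis by (simp add: m_def)
qed

text \<open>\<open>X i j / r i\<close> is the Gibbs weight \<open>delta\<close>, so the entropy term expands around \<open>X\<close>
  into the KL divergence plus a term linear in \<open>X' - X\<close>.\<close>
lemma eps_xlogx_diff_eq:
  assumes X: "\<And>i j. X i j = r i * delta \<epsilon> \<kappa> \<mu> i j" and r_nonneg: "\<And>i. 0 \<le> r i"
    and feasible: "feasible T r X' q'"
  shows "\<epsilon> * (xlogx (X' i j) (r i) - xlogx (X i j) (r i))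
      = \<epsilon> * kl_div (X' i j) (X i j) + (\<epsilon> + phi \<epsilon> \<kappa> \<mu> i - \<kappa> i j - \<mu> j) * (X' i j - X i j)"
proof (cases "r i = 0")
  case True
  then show ?thesis using feasible_row_eq_0[OF feasible] by (simp add: X kl_div_def xlogx_def)
next
  case False
  then have r: "r i > 0" using r_nonneg[of i] by simp
  then have X_pos: "X i j > 0" by (simp add: X delta_pos)
  have X'_nonneg: "0 \<le> X' i j" using feasible by (simp add: feasible_def)
  have "\<epsilon> * (xlogx (X' i j) (r i) - xlogx (X i j) (r i))
      = \<epsilon> * kl_div (X' i j) (X i j) + (\<epsilon> + \<epsilon> * ln (X i j / r i)) * (X' i j - X i j)"
    unfolding xlogx_diff_eq[OF X_pos r X'_nonneg] by (simp add: algebra_simps)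
  moreover have "\<epsilon> * ln (X i j / r i) = phi \<epsilon> \<kappa> \<mu> i - \<kappa> i j - \<mu> j"
    using r eps_ln_delta[of \<epsilon>] eps_pos by (simp add: X)
  ultimately show ?thesis by (simp add: algebra_simps)
qed

lemma objective_diff_ge_kl_div:
  assumes \<mu>: "\<And>j. \<mu> j = mu_of T (c j) (q j)"
    and X: "\<And>i j. X i j = r i * delta \<epsilon> \<kappa> \<mu> i j"
    and clearing: "\<And>j. (\<Sum>i\<in>UNIV. X i j) = q j / T"
    and r_nonneg: "\<And>i. 0 \<le> r i" and feasible: "feasible T r X' q'"
  shows "\<epsilon> * (\<Sum>i\<in>UNIV. \<Sum>j\<in>UNIV. kl_div (X' i j) (X i j))
           \<le> objective \<epsilon> \<kappa> c r X' q' - objective \<epsilon> \<kappa> c r X q"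
proof -
  have X'_row: "\<And>i. (\<Sum>j\<in>UNIV. X' i j) = r i" and X'_col: "\<And>j. (\<Sum>i\<in>UNIV. X' i j) = q' j / T"
    using feasible by (auto simp: feasible_def)
  have X_row: "(\<Sum>j\<in>UNIV. X i j) = r i" for i
    by (simp add: X sum_delta_eq_1 flip: sum_distrib_left)
  note entry = eps_xlogx_diff_eq[OF X r_nonneg feasible]
  have rows: "(\<Sum>j\<in>UNIV. (\<epsilon> + phi \<epsilon> \<kappa> \<mu> i) * (X' i j - X i j)) = 0" for i
    by (simp add: sum_subtractf X'_row X_row flip: sum_distrib_left)
  have "\<epsilon> * (\<Sum>i\<in>UNIV. \<Sum>j\<in>UNIV. xlogx (X' i j) (r i) - xlogx (X i j) (r i))
      = (\<Sum>i\<in>UNIV. \<Sum>j\<in>UNIV. \<epsilon> * kl_div (X' i j) (X i j)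
          + (\<epsilon> + phi \<epsilon> \<kappa> \<mu> i) * (X' i j - X i j)
          - \<kappa> i j * (X' i j - X i j) - \<mu> j * (X' i j - X i j))"
    unfolding sum_distrib_left by (intro sum.cong refl) (subst entry, simp add: algebra_simps)
  also have "\<dots> = \<epsilon> * (\<Sum>i\<in>UNIV. \<Sum>j\<in>UNIV. kl_div (X' i j) (X i j))
        - (\<Sum>i\<in>UNIV. \<Sum>j\<in>UNIV. \<kappa> i j * (X' i j - X i j))
        - (\<Sum>i\<in>UNIV. \<Sum>j\<in>UNIV. \<mu> j * (X' i j - X i j))"
    by (simp add: sum.distrib sum_subtractf sum_distrib_left rows)
  finally have entropy_part: "\<epsilon> * (\<Sum>i\<in>UNIV. \<Sum>j\<in>UNIV. xlogx (X' i j) (r i) - xlogx (X i j) (r i))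
      = \<epsilon> * (\<Sum>i\<in>UNIV. \<Sum>j\<in>UNIV. kl_div (X' i j) (X i j))
        - (\<Sum>i\<in>UNIV. \<Sum>j\<in>UNIV. \<kappa> i j * (X' i j - X i j))
        - (\<Sum>i\<in>UNIV. \<Sum>j\<in>UNIV. \<mu> j * (X' i j - X i j))" .
  have "(\<Sum>i\<in>UNIV. \<Sum>j\<in>UNIV. \<mu> j * (X' i j - X i j)) = (\<Sum>j\<in>UNIV. mu_of T (c j) (q j) / T * (q' j - q j))"
    by (subst sum.swap)
      (simp add: \<mu> X'_col clearing sum_subtractf right_diff_distrib diff_divide_distrib
        flip: sum_distrib_left)
  also have "\<dots> \<le> (\<Sum>j\<in>UNIV. beta (c j) (q' j)) - (\<Sum>j\<in>UNIV. beta (c j) (q j))"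
    using beta_ge_tangent[OF c_pos T_pos] by (simp add: sum_mono algebra_simps flip: sum_subtractf)
  finally have beta_part: "(\<Sum>i\<in>UNIV. \<Sum>j\<in>UNIV. \<mu> j * (X' i j - X i j))
      \<le> (\<Sum>j\<in>UNIV. beta (c j) (q' j)) - (\<Sum>j\<in>UNIV. beta (c j) (q j))" .
  moreover have "(\<Sum>i\<in>UNIV. \<Sum>j\<in>UNIV. \<kappa> i j * (X' i j - X i j))
      = (\<Sum>i\<in>UNIV. \<Sum>j\<in>UNIV. \<kappa> i j * X' i j) - (\<Sum>i\<in>UNIV. \<Sum>j\<in>UNIV. \<kappa> i j * X i j)"
    by (simp add: right_diff_distrib sum_subtractf)
  moreover have "\<epsilon> * (\<Sum>i\<in>UNIV. \<Sum>j\<in>UNIV. xlogx (X' i j) (r i) - xlogx (X i j) (r i))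
      = \<epsilon> * (\<Sum>i\<in>UNIV. \<Sum>j\<in>UNIV. xlogx (X' i j) (r i)) - \<epsilon> * (\<Sum>i\<in>UNIV. \<Sum>j\<in>UNIV. xlogx (X i j) (r i))"
    by (simp add: right_diff_distrib sum_subtractf)
  ultimately show ?thesis
    using entropy_part unfolding objective_def by linarith
qed

end

locale elastic_network = priced_network \<epsilon> T \<kappa> c
  for \<epsilon> T :: real and \<kappa> :: "'m::finite \<Rightarrow> 'n::finite \<Rightarrow> real" and c :: "'n \<Rightarrow> real" +
  fixes rbar :: "'m \<Rightarrow> real" and p U :: "'m \<Rightarrow> real \<Rightarrow> real"
  assumes rbar_pos: "\<And>i. rbar i > 0"
    and p_range: "\<And>i \<tau>. 0 \<le> p i \<tau> \<and> p i \<tau> \<le> 1"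
    and p_cont: "\<And>i. continuous_on UNIV (p i)"
    and U_strict_concave: "\<And>i. strict_concave_on {0..rbar i} (U i)"
    and U_demand: "\<And>i \<tau>. is_arg_max (\<lambda>r. U i r - \<tau> * r) (\<lambda>r. r \<in> {0..rbar i}) (rbar i * p i \<tau>)"
begin

lemma equilibrium_exists: "\<exists>X q \<mu> r. equilibrium \<epsilon> T \<kappa> c rbar p X q \<mu> r"
proof -
  define price where "price v = (\<lambda>j. mu_of T (c j) (v $ j))" for v :: "real ^ 'n"
  define flow where "flow v i j = rbar i * p i (phi \<epsilon> \<kappa> (price v) i) * delta \<epsilon> \<kappa> (price v) i j" for v i j
  define F where "F v = (\<chi> j. T * (\<Sum>i\<in>UNIV. flow v i j))" for v
  define B where "B = T * (\<Sum>i\<in>UNIV. rbar i)"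
  define S :: "(real ^ 'n) set" where "S = cbox 0 (\<chi> j. B)"
  have flow_bounds: "0 \<le> flow v i j" "flow v i j \<le> rbar i" for v i j
  proof -
    have "0 \<le> p i (phi \<epsilon> \<kappa> (price v) i) * delta \<epsilon> \<kappa> (price v) i j"
      "p i (phi \<epsilon> \<kappa> (price v) i) * delta \<epsilon> \<kappa> (price v) i j \<le> 1"
      using p_range[of i] delta_pos[of \<epsilon> \<kappa> "price v" i j] delta_le_1[of \<epsilon> \<kappa> "price v" i j]
      by (auto intro!: mult_nonneg_nonneg mult_le_one)
    then show "0 \<le> flow v i j" "flow v i j \<le> rbar i"
      using rbar_pos[of i] mult_left_mono[of _ 1 "rbar i"] by (simp_all add: flow_def mult.assoc)
  qed
  have "continuous_on S (\<lambda>v. price v j)" for j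
    unfolding price_def
    by (intro continuous_on_compose2[OF continuous_on_mu_of[OF c_pos]] continuous_intros) auto
  then have "continuous_on S (\<lambda>v. flow v i j)" for i j
    unfolding flow_def using eps_pos
    by (intro continuous_intros continuous_on_compose2[OF p_cont] continuous_on_phi continuous_on_delta)
      auto
  then have "continuous_on S F"
    unfolding F_def by (intro continuous_intros)
  moreover have "0 \<le> F v $ j \<and> F v $ j \<le> B" for v j
    using flow_bounds T_pos
    by (auto simp: F_def B_def intro!: mult_nonneg_nonneg sum_nonneg mult_left_mono sum_mono)
  then have "F \<in> S \<rightarrow> S" by (auto simp: S_def mem_box_cart)
  moreover have "0 \<in> S"
    using T_pos rbar_pos
    by (auto simp: S_def B_def mem_box_cart less_imp_le intro!: mult_nonneg_nonneg sum_nonneg)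
  ultimately obtain v where "F v = v"
    using brouwer[of S F] by (auto simp: S_def)
  then have "equilibrium \<epsilon> T \<kappa> c rbar p
      (\<lambda>i j. rbar i * p i (phi \<epsilon> \<kappa> (price v) i) * delta \<epsilon> \<kappa> (price v) i j)
      (\<lambda>j. v $ j) (price v) (\<lambda>i. rbar i * p i (phi \<epsilon> \<kappa> (price v) i))"
    using T_pos by (auto simp: equilibrium_def price_def F_def flow_def vec_eq_iff field_simps)
  then show ?thesis by blast
qed

lemma equilibrium_rate_mem: "equilibrium \<epsilon> T \<kappa> c rbar p X q \<mu> r \<Longrightarrow> r \<in> Rbox rbar"
  using U_demand by (auto simp: equilibriumD(2) Rbox_def is_arg_max_linorder)

lemma equilibrium_imp_saddle_point:
  assumes E: "equilibrium \<epsilon> T \<kappa> c rbar p X q \<mu> r"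
  shows "saddle_point_W \<epsilon> \<kappa> c T U rbar r \<mu>"
proof -
  note \<mu> = equilibriumD(1)[OF E] and r = equilibriumD(2)[OF E]
  have clearing: "(\<Sum>i\<in>UNIV. r i * delta \<epsilon> \<kappa> \<mu> i j) = q j / T" for j
    using equilibriumD(4)[OF E] by (simp add: equilibriumD(3)[OF E])
  have r_mem: "r \<in> Rbox rbar" by (rule equilibrium_rate_mem[OF E])
  have "\<mu> \<in> Mbox T"
    using mu_of_nonneg[OF c_pos T_pos] mu_of_less[OF c_pos T_pos] by (simp add: Mbox_def \<mu>)
  moreover have "W \<epsilon> \<kappa> c T U r \<mu>' \<le> W \<epsilon> \<kappa> c T U r \<mu>" if "\<mu>' \<in> Mbox T" for \<mu>'
    using r_mem that by (intro W_le_at_clearing_price[OF \<mu> clearing]) (auto simp: Rbox_def)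
  moreover have "W \<epsilon> \<kappa> c T U r \<mu> \<le> W \<epsilon> \<kappa> c T U r' \<mu>" if "r' \<in> Rbox rbar" for r'
  proof -
    have "r i * phi \<epsilon> \<kappa> \<mu> i - U i (r i) \<le> r' i * phi \<epsilon> \<kappa> \<mu> i - U i (r' i)" for i
    proof -
      have "r' i \<in> {0..rbar i}" using that by (simp add: Rbox_def)
      then have "U i (r' i) - phi \<epsilon> \<kappa> \<mu> i * r' i \<le> U i (r i) - phi \<epsilon> \<kappa> \<mu> i * r i"
        using U_demand[of i "phi \<epsilon> \<kappa> \<mu> i"] by (simp add: r[symmetric] is_arg_max_linorder)
      then show ?thesis by (simp add: algebra_simps)
    qed
    then show ?thesis unfolding W_def by (simp add: sum_mono)
  qed
  ultimately show ?thesis using r_mem by (simp add: saddle_point_W_def)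
qed

lemma equilibrium_feasible:
  assumes E: "equilibrium \<epsilon> T \<kappa> c rbar p X q \<mu> r"
  shows "feasible T r X q"
proof -
  have "0 \<le> r i" for i using equilibrium_rate_mem[OF E] by (simp add: Rbox_def)
  then have "0 \<le> X i j" for i j by (simp add: equilibriumD(3)[OF E] less_imp_le[OF delta_pos])
  moreover have "(\<Sum>j\<in>UNIV. X i j) = r i" for i
    by (simp add: equilibriumD(3)[OF E] sum_delta_eq_1 flip: sum_distrib_left)
  ultimately show ?thesis by (simp add: feasible_def equilibriumD(4)[OF E])
qed

lemma equilibrium_imp_solves_transport:
  assumes E: "equilibrium \<epsilon> T \<kappa> c rbar p X q \<mu> r"
  shows "solves_transport \<epsilon> T \<kappa> c r X q"
proof -
  have r_nonneg: "0 \<le> r i" for i using equilibrium_rate_mem[OF E] by (simp add: Rbox_def)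
  note X = equilibriumD(3)[OF E]
  have "objective \<epsilon> \<kappa> c r X q \<le> objective \<epsilon> \<kappa> c r X' q'" if feasible: "feasible T r X' q'" for X' q'
  proof -
    have "0 \<le> \<epsilon> * (\<Sum>i\<in>UNIV. \<Sum>j\<in>UNIV. kl_div (X' i j) (X i j))"
      using eps_pos kl_div_feasible_flow(1)[OF X r_nonneg feasible] by (simp add: sum_nonneg)
    then show ?thesis
      using objective_diff_ge_kl_div[OF equilibriumD(1)[OF E] X equilibriumD(4)[OF E] r_nonneg feasible]
      by linarith
  qed
  then show ?thesis using equilibrium_feasible[OF E] by (simp add: solves_transport_def)
qed

lemma solves_transport_unique:
  assumes E: "equilibrium \<epsilon> T \<kappa> c rbar p X q \<mu> r" and sol: "solves_transport \<epsilon> T \<kappa> c r X' q'"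
  shows "X' = X \<and> q' = q"
proof -
  have r_nonneg: "0 \<le> r i" for i using equilibrium_rate_mem[OF E] by (simp add: Rbox_def)
  note X = equilibriumD(3)[OF E] and clearing = equilibriumD(4)[OF E]
  have feasible: "feasible T r X' q'" and "objective \<epsilon> \<kappa> c r X' q' \<le> objective \<epsilon> \<kappa> c r X q"
    using sol equilibrium_feasible[OF E] by (auto simp: solves_transport_def)
  then have "\<epsilon> * (\<Sum>i\<in>UNIV. \<Sum>j\<in>UNIV. kl_div (X' i j) (X i j)) \<le> 0"
    using objective_diff_ge_kl_div[OF equilibriumD(1)[OF E] X clearing r_nonneg feasible] by linarith
  then have total: "(\<Sum>i\<in>UNIV. \<Sum>j\<in>UNIV. kl_div (X' i j) (X i j)) \<le> 0"
    using eps_pos by (simp add: mult_le_0_iff)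
  note kl = kl_div_feasible_flow[OF X r_nonneg feasible]
  have "X' i j = X i j" for i j
  proof -
    have "kl_div (X' i j) (X i j) \<le> (\<Sum>j\<in>UNIV. kl_div (X' i j) (X i j))"
      using kl(1) by (intro member_le_sum) auto
    also have "\<dots> \<le> (\<Sum>i\<in>UNIV. \<Sum>j\<in>UNIV. kl_div (X' i j) (X i j))"
      using kl(1) by (intro member_le_sum sum_nonneg) auto
    finally have "kl_div (X' i j) (X i j) = 0" using total kl(1)[of i j] by linarith
    then show ?thesis using kl(2) by simp
  qed
  then have X': "X' = X" by (intro ext)
  have "q' j / T = q j / T" for j
    using feasible clearing[of j] by (simp add: feasible_def X')
  then have "q' = q" using T_pos by (intro ext) simp
  with X' show ?thesis by simp
qed

lemma saddle_point_rate:
  assumes saddle: "saddle_point_W \<epsilon> \<kappa> c T U rbar r \<mu>"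
  shows "r i = rbar i * p i (phi \<epsilon> \<kappa> \<mu> i)"
proof -
  define a where "a = rbar i * p i (phi \<epsilon> \<kappa> \<mu> i)"
  have arg_max: "is_arg_max (\<lambda>x. U i x - phi \<epsilon> \<kappa> \<mu> i * x) (\<lambda>x. x \<in> {0..rbar i}) a"
    using U_demand by (simp add: a_def)
  have r_mem: "r \<in> Rbox rbar" using saddle by (simp add: saddle_point_W_def)
  have "r(i := a) \<in> Rbox rbar" using r_mem arg_max by (simp add: Rbox_def is_arg_max_linorder)
  then have "W \<epsilon> \<kappa> c T U r \<mu> \<le> W \<epsilon> \<kappa> c T U (r(i := a)) \<mu>"
    by (rule saddle_point_W_min[OF saddle])
  then have "U i a - phi \<epsilon> \<kappa> \<mu> i * a \<le> U i (r i) - phi \<epsilon> \<kappa> \<mu> i * r i"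
    by (simp add: W_fun_upd algebra_simps)
  moreover have "r i \<in> {0..rbar i}" using r_mem by (simp add: Rbox_def)
  ultimately show ?thesis
    using strict_concave_on_arg_max_unique[OF strict_concave_on_diff_linear[OF U_strict_concave] arg_max]
    by (simp add: a_def)
qed

lemma saddle_point_unique:
  assumes s1: "saddle_point_W \<epsilon> \<kappa> c T U rbar r1 \<mu>1" and s2: "saddle_point_W \<epsilon> \<kappa> c T U rbar r2 \<mu>2"
  shows "\<mu>1 = \<mu>2 \<and> r1 = r2"
proof -
  have mem: "r1 \<in> Rbox rbar" "\<mu>1 \<in> Mbox T" "r2 \<in> Rbox rbar" "\<mu>2 \<in> Mbox T"
    using s1 s2 by (simp_all add: saddle_point_W_def)
  have "W \<epsilon> \<kappa> c T U r1 \<mu>2 \<le> W \<epsilon> \<kappa> c T U r1 \<mu>1" "W \<epsilon> \<kappa> c T U r1 \<mu>1 \<le> W \<epsilon> \<kappa> c T U r2 \<mu>1"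
    "W \<epsilon> \<kappa> c T U r2 \<mu>1 \<le> W \<epsilon> \<kappa> c T U r2 \<mu>2" "W \<epsilon> \<kappa> c T U r2 \<mu>2 \<le> W \<epsilon> \<kappa> c T U r1 \<mu>2"
    using mem saddle_point_W_le[OF s1] saddle_point_W_le[OF s2] by simp_all
  then have W_eq: "W \<epsilon> \<kappa> c T U r1 \<mu>2 = W \<epsilon> \<kappa> c T U r1 \<mu>1" by linarith
  have "\<mu>1 = \<mu>2"
  proof (rule ccontr)
    assume "\<mu>1 \<noteq> \<mu>2"
    then have "2 * W \<epsilon> \<kappa> c T U r1 \<mu>1 < 2 * W \<epsilon> \<kappa> c T U r1 (\<lambda>j. (\<mu>1 j + \<mu>2 j) / 2)"
      using W_midpoint_gt[of r1 \<mu>1 \<mu>2 U] mem W_eq by (simp add: Rbox_def)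
    moreover have "(\<lambda>j. (\<mu>1 j + \<mu>2 j) / 2) \<in> Mbox T"
    proof -
      have bounds: "0 \<le> \<mu>1 j" "\<mu>1 j < T" "0 \<le> \<mu>2 j" "\<mu>2 j < T" for j
        using mem by (simp_all add: Mbox_def)
      have "0 \<le> (\<mu>1 j + \<mu>2 j) / 2 \<and> (\<mu>1 j + \<mu>2 j) / 2 < T" for j
        using bounds[of j] by auto
      then show ?thesis by (simp add: Mbox_def)
    qed
    then have "W \<epsilon> \<kappa> c T U r1 (\<lambda>j. (\<mu>1 j + \<mu>2 j) / 2) \<le> W \<epsilon> \<kappa> c T U r1 \<mu>1"
      by (rule saddle_point_W_max[OF s1])
    ultimately show False by linarith
  qed
  moreover have "r1 = r2"
    using saddle_point_rate[OF s1] saddle_point_rate[OF s2] \<open>\<mu>1 = \<mu>2\<close> by (intro ext) simp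
  ultimately show ?thesis ..
qed

lemma equilibrium_unique:
  assumes E1: "equilibrium \<epsilon> T \<kappa> c rbar p X1 q1 \<mu>1 r1" and E2: "equilibrium \<epsilon> T \<kappa> c rbar p X2 q2 \<mu>2 r2"
  shows "X1 = X2 \<and> q1 = q2 \<and> \<mu>1 = \<mu>2 \<and> r1 = r2"
proof -
  obtain \<mu>: "\<mu>1 = \<mu>2" and r: "r1 = r2"
    using saddle_point_unique[OF equilibrium_imp_saddle_point[OF E1] equilibrium_imp_saddle_point[OF E2]]
    by blast
  have X: "X1 = X2"
    using equilibriumD(3)[OF E1] equilibriumD(3)[OF E2] by (intro ext) (simp add: \<mu> r)
  have "q1 j / T = q2 j / T" for j
    using equilibriumD(4)[OF E1, of j] equilibriumD(4)[OF E2, of j] by (auto simp: X)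
  then have "q1 = q2" using T_pos by (intro ext) simp
  with X \<mu> r show ?thesis by simp
qed

end

theorem theorem3:
  fixes c :: "'n::finite \<Rightarrow> real" and T \<epsilon> :: real
    and \<kappa> :: "'m::finite \<Rightarrow> 'n \<Rightarrow> real"
    and rbar :: "'m \<Rightarrow> real"
    and p :: "'m \<Rightarrow> real \<Rightarrow> real" and U :: "'m \<Rightarrow> real \<Rightarrow> real"
    and Xs :: "'m \<Rightarrow> 'n \<Rightarrow> real" and qs \<mu>s :: "'n \<Rightarrow> real" and rs :: "'m \<Rightarrow> real"
  assumes c_pos: "\<And>j. c j > 0"
    and T_pos: "T > 0" and eps_pos: "\<epsilon> > 0"
    and kappa_nonneg: "\<And>i j. \<kappa> i j \<ge> 0"
    and rbar_pos: "\<And>i. rbar i > 0"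
    and p_range: "\<And>i \<tau>. 0 \<le> p i \<tau> \<and> p i \<tau> \<le> 1"
    and p_cont: "\<And>i. continuous_on UNIV (p i)"
    and p_antimono: "\<And>i. antimono (p i)"
    and p_neg: "\<And>i \<tau>. \<tau> \<le> 0 \<Longrightarrow> p i \<tau> = 1"
    and p_lim: "\<And>i. (p i \<longlongrightarrow> 0) at_top"
    and U_cont: "\<And>i. continuous_on {0..rbar i} (U i)"
    and U_mono: "\<And>i. mono_on {0..rbar i} (U i)"
    and U_strict_concave: "\<And>i. strict_concave_on {0..rbar i} (U i)"
    and U_demand: "\<And>i \<tau>. is_arg_max (\<lambda>r. U i r - \<tau> * r) (\<lambda>r. r \<in> {0..rbar i})
                              (rbar i * p i \<tau>)"
  shows "((saddle_point_W \<epsilon> \<kappa> c T U rbar rs \<mu>s \<and> solves_transport \<epsilon> T \<kappa> c rs Xs qs)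
            \<longleftrightarrow> equilibrium \<epsilon> T \<kappa> c rbar p Xs qs \<mu>s rs)
         \<and> (\<exists>!(X, q, \<mu>, r). equilibrium \<epsilon> T \<kappa> c rbar p X q \<mu> r)"
proof -
  interpret elastic_network \<epsilon> T \<kappa> c rbar p U
    using c_pos T_pos eps_pos rbar_pos p_range p_cont U_strict_concave U_demand by unfold_locales
  obtain X0 q0 \<mu>0 r0 where E0: "equilibrium \<epsilon> T \<kappa> c rbar p X0 q0 \<mu>0 r0"
    using equilibrium_exists by blast
  have "equilibrium \<epsilon> T \<kappa> c rbar p Xs qs \<mu>s rs"
    if saddle: "saddle_point_W \<epsilon> \<kappa> c T U rbar rs \<mu>s" and sol: "solves_transport \<epsilon> T \<kappa> c rs Xs qs"
  proof -
    have "\<mu>s = \<mu>0 \<and> rs = r0"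
      by (rule saddle_point_unique[OF saddle equilibrium_imp_saddle_point[OF E0]])
    moreover have "Xs = X0 \<and> qs = q0"
      using solves_transport_unique[OF E0] sol calculation by simp
    ultimately show ?thesis using E0 by simp
  qed
  then have "(saddle_point_W \<epsilon> \<kappa> c T U rbar rs \<mu>s \<and> solves_transport \<epsilon> T \<kappa> c rs Xs qs)
      \<longleftrightarrow> equilibrium \<epsilon> T \<kappa> c rbar p Xs qs \<mu>s rs"
    using equilibrium_imp_saddle_point equilibrium_imp_solves_transport by blast
  moreover have "\<exists>!(X, q, \<mu>, r). equilibrium \<epsilon> T \<kappa> c rbar p X q \<mu> r"
    using E0 equilibrium_unique by (intro ex1I[of _ "(X0, q0, \<mu>0, r0)"]) auto
  ultimately show ?thesis ..
qed

end
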